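(* Let $([N],\mathcal{E})$ be a fixed (non-random) directed graph whose underlying undirected graph is a tree, and condition the model on the skeleton being this graph (i.e. $I_{vw}=1$ iff $(vw)\in\mathcal{E}$, with the types fixed). Let $\lambda\in(0,1]$ and define the solvency cascade by: for $n\ge0$, $\mathcal{D}^{(n)}_v:=g_\lambda(\Delta^{(n)}_v/\bar X_v)$ (with $\mathcal{D}^{(n)}_v:=0$ if $\bar X_v=0$), $S^{(n)}_{wv}:=I_{wv}\bar\Omega_{wv}\mathcal{D}^{(n)}_w$, $S^{(n)}_v:=\sum_{w\ne v}S^{(n)}_{wv}$, $\Delta^{(n+1)}_v:=\Delta^{(0)}_v-S^{(n)}_v$. Then for every $n\ge0$, every $v\in[N]$ and every edge $(wv)\in\mathcal{E}$: (1) $\Delta^{(n)}_v$ is $\sigma(\mathcal{M}^-_v\cup\{v\})$-measurable; (2) $S^{(n)}_{wv}$ is $\sigma(\mathcal{M}^-_w\cup\mathcal{M}^+_{w\setminus v}\cup\{w\}\cup\{(wv)\})$-measurable; (3) $S^{(n)}_v$ is $\sigma(\mathcal{M}^-_v)$-measurable.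
   Context: Balance-sheet data: initial solvency buffers $\Delta^{(0)}_u\in\mathbb{R}$ for nodes $u$ and exposures $\bar\Omega_{wv}\ge0$ for edges $(wv)$; an edge $(wv)\in\mathcal{E}$ (i.e. $I_{wv}=1$) means bank $w$ has borrowed from bank $v$, so shocks pass from $w$ to $v$. $\bar X_w:=\sum_{u}I_{wu}\bar\Omega_{wu}$ and $g_\lambda(x):=\min(1,\max(-x/\lambda,0))$. For a set $A$ of nodes and edges, $\sigma(A)$ is the sigma-algebra generated by $\{\Delta^{(0)}_u: u\in A \text{ a node}\}\cup\{\bar\Omega_{wv}:(wv)\in A\text{ an edge}\}$. For a node $u$ and an edge $e$ incident to $u$, let $C(e,u)$ be the set consisting of $e$ together with all nodes and edges of the connected component, not containing $u$, of the tree with $e$ removed. Define $\mathcal{M}^-_u:=\bigcup\{C(e,u): e=(wu)\in\mathcal{E}\text{ directed into }u\}$, $\mathcal{M}^+_u:=\bigcup\{C(e,u): e=(uw)\in\mathcal{E}\text{ directed out of }u\}$, and for an edge $(wv)\in\mathcal{E}$, $\mathcal{M}^-_{v\setminus w}:=\bigcup\{C(e,v): e\text{ directed into }v,\ e\neq(wv)\}$ and $\mathcal{M}^+_{w\setminus v}:=\bigcup\{C(e,w): e\text{ directed out of }w,\ e\ne(wv)\}$. *)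

theory Defs
  imports "HOL-Probability.Probability"
begin

text \<open>Nodes are \<open>{1..N}\<close>; a directed edge \<open>(w,v) \<in> E\<close> means \<open>I_wv = 1\<close>
  (bank w borrowed from bank v; shocks pass from w to v).\<close>

definition und_adj :: "(nat \<times> nat) set \<Rightarrow> nat \<Rightarrow> nat \<Rightarrow> bool" where
  "und_adj E a b \<longleftrightarrow> (a, b) \<in> E \<or> (b, a) \<in> E"

text \<open>The underlying undirected graph of \<open>({1..N}, E)\<close> is a tree: the digraph
  is loop-free, has no pair of antiparallel edges (otherwise the underlying
  undirected multigraph has a double edge), and the underlying undirected
  graph is connected and has no cycle.\<close>
definition underlying_tree :: "nat \<Rightarrow> (nat \<times> nat) set \<Rightarrow> bool" where
  "underlying_tree N E \<longleftrightarrow>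
     E \<subseteq> {1..N} \<times> {1..N}
   \<and> (\<forall>v. (v, v) \<notin> E)
   \<and> (\<forall>a b. (a, b) \<in> E \<longrightarrow> (b, a) \<notin> E)
   \<and> (\<forall>a\<in>{1..N}. \<forall>b\<in>{1..N}. (a, b) \<in> {(x, y). und_adj E x y}\<^sup>*)
   \<and> \<not> (\<exists>xs. length xs \<ge> 3 \<and> distinct xs \<and>
          (\<forall>i < length xs. und_adj E (xs ! i) (xs ! ((i + 1) mod length xs))))"

type_synonym ne_set = "nat set \<times> (nat \<times> nat) set"

definition ne_union :: "ne_set set \<Rightarrow> ne_set" where
  "ne_union S = (\<Union>A\<in>S. fst A, \<Union>A\<in>S. snd A)"

definition comp_nodes :: "(nat \<times> nat) set \<Rightarrow> nat \<times> nat \<Rightarrow> nat \<Rightarrow> nat set" where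
  "comp_nodes E e x = {y. (x, y) \<in> {(a, b). und_adj (E - {e}) a b}\<^sup>*}"

text \<open>\<open>C(e,u)\<close>: the edge \<open>e\<close> (incident to \<open>u\<close>) together with all nodes and edges
  of the connected component of the tree minus \<open>e\<close> not containing \<open>u\<close>
  (i.e. the component of the other endpoint of \<open>e\<close>).\<close>
definition Cset :: "(nat \<times> nat) set \<Rightarrow> nat \<times> nat \<Rightarrow> nat \<Rightarrow> ne_set" where
  "Cset E e u =
    (let x = (if fst e = u then snd e else fst e);
         K = comp_nodes E e x
     in (K, {e} \<union> {(p, q) \<in> E - {e}. p \<in> K \<and> q \<in> K}))"

definition Mminus :: "(nat \<times> nat) set \<Rightarrow> nat \<Rightarrow> ne_set" where
  "Mminus E u = ne_union {Cset E e u | e. e \<in> E \<and> snd e = u}"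

definition Mplus :: "(nat \<times> nat) set \<Rightarrow> nat \<Rightarrow> ne_set" where
  "Mplus E u = ne_union {Cset E e u | e. e \<in> E \<and> fst e = u}"

definition Mminus_excl :: "(nat \<times> nat) set \<Rightarrow> nat \<Rightarrow> nat \<Rightarrow> ne_set" where
  "Mminus_excl E v w = ne_union {Cset E e v | e. e \<in> E \<and> snd e = v \<and> e \<noteq> (w, v)}"

definition Mplus_excl :: "(nat \<times> nat) set \<Rightarrow> nat \<Rightarrow> nat \<Rightarrow> ne_set" where
  "Mplus_excl E w v = ne_union {Cset E e w | e. e \<in> E \<and> fst e = w \<and> e \<noteq> (w, v)}"

definition sigmaA ::
  "'a measure \<Rightarrow> (nat \<Rightarrow> 'a \<Rightarrow> real) \<Rightarrow> (nat \<Rightarrow> nat \<Rightarrow> 'a \<Rightarrow> real) \<Rightarrow> ne_set \<Rightarrow> 'a measure" where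
  "sigmaA M D0 Om A = sigma (space M)
     ({D0 u -` B \<inter> space M | u B. u \<in> fst A \<and> B \<in> sets borel}
      \<union> {Om w v -` B \<inter> space M | w v B. (w, v) \<in> snd A \<and> B \<in> sets borel})"

definition g_lam :: "real \<Rightarrow> real \<Rightarrow> real" where
  "g_lam lam x = min 1 (max (- x / lam) 0)"

definition Ind :: "(nat \<times> nat) set \<Rightarrow> nat \<Rightarrow> nat \<Rightarrow> real" where
  "Ind E w v = (if (w, v) \<in> E then 1 else 0)"

definition Xbar :: "nat \<Rightarrow> (nat \<times> nat) set \<Rightarrow> (nat \<Rightarrow> nat \<Rightarrow> 'a \<Rightarrow> real) \<Rightarrow> nat \<Rightarrow> 'a \<Rightarrow> real" where
  "Xbar N E Om w \<omega> = (\<Sum>u\<in>{1..N}. Ind E w u * Om w u \<omega>)"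

definition dfrac :: "real \<Rightarrow> real \<Rightarrow> real \<Rightarrow> real" where
  "dfrac lam X d = (if X = 0 then 0 else g_lam lam (d / X))"

primrec Delta ::
  "nat \<Rightarrow> (nat \<times> nat) set \<Rightarrow> real \<Rightarrow> (nat \<Rightarrow> 'a \<Rightarrow> real) \<Rightarrow> (nat \<Rightarrow> nat \<Rightarrow> 'a \<Rightarrow> real)
   \<Rightarrow> nat \<Rightarrow> nat \<Rightarrow> 'a \<Rightarrow> real" where
  "Delta N E lam D0 Om 0 v \<omega> = D0 v \<omega>"
| "Delta N E lam D0 Om (Suc n) v \<omega> = D0 v \<omega> -
     (\<Sum>w\<in>{1..N} - {v}. Ind E w v * Om w v \<omega> *
        dfrac lam (Xbar N E Om w \<omega>) (Delta N E lam D0 Om n w \<omega>))"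

definition Dcal ::
  "nat \<Rightarrow> (nat \<times> nat) set \<Rightarrow> real \<Rightarrow> (nat \<Rightarrow> 'a \<Rightarrow> real) \<Rightarrow> (nat \<Rightarrow> nat \<Rightarrow> 'a \<Rightarrow> real)
   \<Rightarrow> nat \<Rightarrow> nat \<Rightarrow> 'a \<Rightarrow> real" where
  "Dcal N E lam D0 Om n v \<omega> = dfrac lam (Xbar N E Om v \<omega>) (Delta N E lam D0 Om n v \<omega>)"

definition Sedge ::
  "nat \<Rightarrow> (nat \<times> nat) set \<Rightarrow> real \<Rightarrow> (nat \<Rightarrow> 'a \<Rightarrow> real) \<Rightarrow> (nat \<Rightarrow> nat \<Rightarrow> 'a \<Rightarrow> real)
   \<Rightarrow> nat \<Rightarrow> nat \<Rightarrow> nat \<Rightarrow> 'a \<Rightarrow> real" where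
  "Sedge N E lam D0 Om n w v \<omega> = Ind E w v * Om w v \<omega> * Dcal N E lam D0 Om n w \<omega>"

definition Stot ::
  "nat \<Rightarrow> (nat \<times> nat) set \<Rightarrow> real \<Rightarrow> (nat \<Rightarrow> 'a \<Rightarrow> real) \<Rightarrow> (nat \<Rightarrow> nat \<Rightarrow> 'a \<Rightarrow> real)
   \<Rightarrow> nat \<Rightarrow> nat \<Rightarrow> 'a \<Rightarrow> real" where
  "Stot N E lam D0 Om n v \<omega> = (\<Sum>w\<in>{1..N} - {v}. Sedge N E lam D0 Om n w v \<omega>)"

lemma Delta_Suc_Stot:
  "Delta N E lam D0 Om (Suc n) v \<omega> = D0 v \<omega> - Stot N E lam D0 Om n v \<omega>"
  by (simp add: Stot_def Sedge_def Dcal_def)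

end

theory Submission
  imports Defs "HOL-Library.Transitive_Closure_Table"
begin

text \<open>Every quantity of the cascade at a node is a measurable function of finitely many
  balance-sheet variables, so it suffices to track which variables can influence it.
  The loss \<open>S_wv\<close> passed along the edge \<open>(w,v)\<close> depends only on the buffer of \<open>w\<close>, on the
  exposures of \<open>w\<close> (through \<open>X_w\<close>) and, recursively, on everything upstream of \<open>w\<close>. Since
  the underlying graph is a tree, removing \<open>(w,v)\<close> cuts off a component containing \<open>w\<close>
  that contains all branches of \<open>w\<close> other than the one through \<open>v\<close>; this component is
  \<open>C((w,v),v) \<subseteq> M^-_v\<close>. An induction on \<open>n\<close> then propagates the measurability of
  \<open>\<Delta>^(n)\<close> to \<open>S^(n)\<close> and back to \<open>\<Delta>^(n+1)\<close>.\<close>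

lemma comp_nodes_iff_rtranclp:
  "y \<in> comp_nodes E e x \<longleftrightarrow> (und_adj (E - {e}))\<^sup>*\<^sup>* x y"
  unfolding comp_nodes_def by (simp add: rtranclp_rtrancl_eq)

lemma comp_nodes_self: "x \<in> comp_nodes E e x"
  unfolding comp_nodes_def by simp

lemma underlying_tree_no_loop: "underlying_tree N E \<Longrightarrow> (v, v) \<notin> E"
  unfolding underlying_tree_def by blast

lemma endpoints_separated_by_edge:
  assumes T: "underlying_tree N E" and eE: "e \<in> E" and ey: "e = (y, z) \<or> e = (z, y)"
  shows "z \<notin> comp_nodes E e y"
proof
  assume "z \<in> comp_nodes E e y"
  then obtain xs where "rtrancl_path (und_adj (E - {e})) y xs z"
    by (auto simp: comp_nodes_iff_rtranclp rtranclp_eq_rtrancl_path)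
  then obtain xs where path: "rtrancl_path (und_adj (E - {e})) y xs z"
    and dist: "distinct (y # xs)" by (rule rtrancl_path_distinct)
  have asym: "\<forall>a b. (a, b) \<in> E \<longrightarrow> (b, a) \<notin> E"
    and no_cycle: "\<not> (\<exists>xs. length xs \<ge> 3 \<and> distinct xs \<and>
          (\<forall>i < length xs. und_adj E (xs ! i) (xs ! ((i + 1) mod length xs))))"
    using T unfolding underlying_tree_def by blast+
  have "y \<noteq> z" using ey eE underlying_tree_no_loop[OF T] by auto
  then have xs_ne: "xs \<noteq> []" using path by (auto elim: rtrancl_path.cases)
  have last_xs: "last xs = z" using path xs_ne by (rule rtrancl_path_last)
  show False
  proof (cases "length xs = 1")
    case True
    with last_xs have "xs = [z]" by (cases xs) auto
    with path have "und_adj (E - {e}) y z" by (auto elim: rtrancl_path.cases)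
    then show False using ey eE asym unfolding und_adj_def by auto
  next
    case long: False
    let ?cycle = "y # xs"
    \<comment> \<open>the path closes up through \<open>e\<close> to a cycle of length at least 3\<close>
    have "length ?cycle \<ge> 3" using xs_ne long by (cases xs) (auto simp: Suc_le_eq)
    moreover have "\<forall>i < length ?cycle. und_adj E (?cycle ! i) (?cycle ! ((i + 1) mod length ?cycle))"
    proof (intro allI impI)
      fix i assume i: "i < length ?cycle"
      show "und_adj E (?cycle ! i) (?cycle ! ((i + 1) mod length ?cycle))"
      proof (cases "i < length xs")
        case True
        then have "und_adj (E - {e}) (?cycle ! i) (xs ! i)" by (rule rtrancl_path_nth[OF path])
        with True show ?thesis unfolding und_adj_def by auto
      next
        case False
        with i have "i = length xs" by simp
        then have "?cycle ! i = z" "(i + 1) mod length ?cycle = 0"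
          using xs_ne last_xs by (auto simp: last_conv_nth)
        then show ?thesis using ey eE unfolding und_adj_def by auto
      qed
    qed
    ultimately show False using no_cycle dist by blast
  qed
qed

lemma comp_nodes_nested:
  assumes T: "underlying_tree N E" and fE: "f \<in> E" and eE: "e \<in> E" and "f \<noteq> e"
    and fx: "f = (x, y) \<or> f = (y, x)" and ey: "e = (y, z) \<or> e = (z, y)"
  shows "comp_nodes E f x \<subseteq> comp_nodes E e y"
proof
  fix t assume "t \<in> comp_nodes E f x"
  then have "(und_adj (E - {f}))\<^sup>*\<^sup>* x t" by (simp add: comp_nodes_iff_rtranclp)
  then show "t \<in> comp_nodes E e y"
  proof (induction rule: rtranclp_induct)
    case base
    have "und_adj (E - {e}) y x" using fx fE \<open>f \<noteq> e\<close> unfolding und_adj_def by auto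
    then show ?case by (simp add: comp_nodes_iff_rtranclp)
  next
    case (step a b)
    show ?case
    proof (cases "und_adj (E - {e}) a b")
      case True
      with step.IH show ?thesis by (simp add: comp_nodes_iff_rtranclp)
    next
      case False
      with step.hyps(2) ey have "(a = y \<and> b = z) \<or> (a = z \<and> b = y)"
        unfolding und_adj_def by auto
      moreover have "y \<notin> comp_nodes E f x"
        using endpoints_separated_by_edge[OF T fE] fx by auto
      ultimately show ?thesis
        using step.hyps(1) by (auto simp: comp_nodes_iff_rtranclp)
    qed
  qed
qed

definition ne_subset :: "ne_set \<Rightarrow> ne_set \<Rightarrow> bool" where
  "ne_subset A B \<longleftrightarrow> fst A \<subseteq> fst B \<and> snd A \<subseteq> snd B"

lemma ne_subset_trans: "ne_subset A B \<Longrightarrow> ne_subset B C \<Longrightarrow> ne_subset A C"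
  unfolding ne_subset_def by blast

lemma ne_union_subset_iff: "ne_subset (ne_union S) B \<longleftrightarrow> (\<forall>A\<in>S. ne_subset A B)"
  unfolding ne_subset_def ne_union_def by auto

lemma ne_subset_ne_union: "A \<in> S \<Longrightarrow> ne_subset A (ne_union S)"
  unfolding ne_subset_def ne_union_def by auto

lemma Cset_other_endpoint:
  assumes "f = (x, u) \<or> f = (u, x)" and "x \<noteq> u"
  shows "Cset E f u = (comp_nodes E f x,
           {f} \<union> {(p, q) \<in> E - {f}. p \<in> comp_nodes E f x \<and> q \<in> comp_nodes E f x})"
  using assms unfolding Cset_def Let_def by auto

lemma Cset_subset_Cset:
  assumes T: "underlying_tree N E" and fE: "f \<in> E" and wv: "(w, v) \<in> E"
    and "f \<noteq> (w, v)" and fx: "f = (x, w) \<or> f = (w, x)"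
  shows "ne_subset (Cset E f w) (Cset E (w, v) v)"
proof -
  let ?K = "comp_nodes E (w, v) w"
  have "x \<noteq> w" "w \<noteq> v" using fx fE wv underlying_tree_no_loop[OF T] by auto
  then have Cf: "Cset E f w = (comp_nodes E f x,
      {f} \<union> {(p, q) \<in> E - {f}. p \<in> comp_nodes E f x \<and> q \<in> comp_nodes E f x})"
    and Cwv: "Cset E (w, v) v = (?K, {(w, v)} \<union> {(p, q) \<in> E - {(w, v)}. p \<in> ?K \<and> q \<in> ?K})"
    using fx by (blast intro: Cset_other_endpoint)+
  have nested: "comp_nodes E f x \<subseteq> ?K"
    using comp_nodes_nested[OF T fE wv \<open>f \<noteq> (w, v)\<close>, of x w v] fx by auto
  have "v \<notin> ?K" using endpoints_separated_by_edge[OF T wv] by simp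
  moreover have "x \<in> ?K" using nested comp_nodes_self by blast
  ultimately show ?thesis
    unfolding Cf Cwv ne_subset_def using nested comp_nodes_self[of w] fE \<open>f \<noteq> (w, v)\<close> fx by auto
qed

lemma upstream_of_edge_subset_Mminus:
  assumes T: "underlying_tree N E" and wv: "(w, v) \<in> E"
  shows "ne_subset (ne_union {Mminus E w, Mplus_excl E w v, ({w}, {}), ({}, {(w, v)})})
           (Mminus E v)"
proof -
  have "w \<noteq> v" using wv underlying_tree_no_loop[OF T] by auto
  have Cwv: "Cset E (w, v) v = (comp_nodes E (w, v) w,
      {(w, v)} \<union> {(p, q) \<in> E - {(w, v)}. p \<in> comp_nodes E (w, v) w \<and> q \<in> comp_nodes E (w, v) w})"
    using \<open>w \<noteq> v\<close> by (intro Cset_other_endpoint) auto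
  have into_w: "ne_subset (Mminus E w) (Cset E (w, v) v)"
  proof -
    have "ne_subset (Cset E f w) (Cset E (w, v) v)" if "f \<in> E" "snd f = w" for f
      using that \<open>w \<noteq> v\<close>
      by (intro Cset_subset_Cset[OF T _ wv, of _ "fst f"]) (auto simp: prod_eq_iff)
    then show ?thesis unfolding Mminus_def ne_union_subset_iff by blast
  qed
  have out_of_w: "ne_subset (Mplus_excl E w v) (Cset E (w, v) v)"
  proof -
    have "ne_subset (Cset E f w) (Cset E (w, v) v)" if "f \<in> E" "fst f = w" "f \<noteq> (w, v)" for f
      using that by (intro Cset_subset_Cset[OF T _ wv, of _ "snd f"]) (auto simp: prod_eq_iff)
    then show ?thesis unfolding Mplus_excl_def ne_union_subset_iff by blast
  qed
  have "ne_subset (ne_union {Mminus E w, Mplus_excl E w v, ({w}, {}), ({}, {(w, v)})})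
          (Cset E (w, v) v)"
    unfolding ne_union_subset_iff using into_w out_of_w comp_nodes_self[of w]
    by (auto simp: Cwv ne_subset_def)
  moreover have "ne_subset (Cset E (w, v) v) (Mminus E v)"
    unfolding Mminus_def using wv by (intro ne_subset_ne_union) auto
  ultimately show ?thesis by (rule ne_subset_trans)
qed

lemma sigmaA_generators_subset:
  "{D0 u -` B \<inter> space M | u B. u \<in> fst A \<and> B \<in> sets borel}
     \<union> {Om w v -` B \<inter> space M | w v B. (w, v) \<in> snd A \<and> B \<in> sets borel} \<subseteq> Pow (space M)"
  by auto

lemma space_sigmaA [simp]: "space (sigmaA M D0 Om A) = space M"
  unfolding sigmaA_def by (rule space_measure_of[OF sigmaA_generators_subset])

lemma sets_sigmaA: "sets (sigmaA M D0 Om A) = sigma_sets (space M)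
     ({D0 u -` B \<inter> space M | u B. u \<in> fst A \<and> B \<in> sets borel}
      \<union> {Om w v -` B \<inter> space M | w v B. (w, v) \<in> snd A \<and> B \<in> sets borel})"
  unfolding sigmaA_def by (rule sets_measure_of[OF sigmaA_generators_subset])

lemma measurable_sigmaA_mono:
  assumes "ne_subset A B" and "f \<in> borel_measurable (sigmaA M D0 Om A)"
  shows "f \<in> borel_measurable (sigmaA M D0 Om B)"
proof -
  have "borel_measurable (sigmaA M D0 Om A) \<subseteq> borel_measurable (sigmaA M D0 Om B)"
    unfolding sigmaA_def
    by (rule measurable_mono1[OF sigmaA_generators_subset])
      (use assms(1) in \<open>auto simp: ne_subset_def\<close>)
  with assms(2) show ?thesis by blast
qed

lemma D0_measurable_sigmaA: "u \<in> fst A \<Longrightarrow> D0 u \<in> borel_measurable (sigmaA M D0 Om A)"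
  by (rule measurableI) (auto simp: sets_sigmaA intro!: sigma_sets.Basic)

lemma Om_measurable_sigmaA: "(w, v) \<in> snd A \<Longrightarrow> Om w v \<in> borel_measurable (sigmaA M D0 Om A)"
  by (rule measurableI) (auto simp: sets_sigmaA intro!: sigma_sets.Basic)

lemma Xbar_measurable_sigmaA:
  assumes "\<And>u. (w, u) \<in> E \<Longrightarrow> (w, u) \<in> snd A"
  shows "Xbar N E Om w \<in> borel_measurable (sigmaA M D0 Om A)"
proof -
  have "(\<lambda>\<omega>. Ind E w u * Om w u \<omega>) \<in> borel_measurable (sigmaA M D0 Om A)" for u
    using Om_measurable_sigmaA[OF assms] by (cases "(w, u) \<in> E") (auto simp: Ind_def)
  then show ?thesis unfolding Xbar_def[abs_def] by (rule borel_measurable_sum)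
qed

lemma dfrac_measurable [measurable]:
  assumes "X \<in> borel_measurable M" and "d \<in> borel_measurable M"
  shows "(\<lambda>\<omega>. dfrac lam (X \<omega>) (d \<omega>)) \<in> borel_measurable M"
  unfolding dfrac_def g_lam_def using assms by measurable

lemma Sedge_measurable:
  assumes wv: "(w, v) \<in> E"
    and Delta_w: "Delta N E lam D0 Om n w
      \<in> borel_measurable (sigmaA M D0 Om (ne_union {Mminus E w, ({w}, {})}))"
  shows "Sedge N E lam D0 Om n w v \<in> borel_measurable (sigmaA M D0 Om
           (ne_union {Mminus E w, Mplus_excl E w v, ({w}, {}), ({}, {(w, v)})}))"
proof -
  let ?A = "ne_union {Mminus E w, Mplus_excl E w v, ({w}, {}), ({}, {(w, v)})}"
  have "ne_subset (ne_union {Mminus E w, ({w}, {})}) ?A"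
    unfolding ne_union_subset_iff by (auto intro: ne_subset_ne_union)
  from this Delta_w have Delta: "Delta N E lam D0 Om n w \<in> borel_measurable (sigmaA M D0 Om ?A)"
    by (rule measurable_sigmaA_mono)
  \<comment> \<open>every out-edge of \<open>w\<close> other than \<open>(w,v)\<close> is the edge of its own \<open>C(\<cdot>,w)\<close>\<close>
  have out_edges: "(w, u) \<in> snd ?A" if "(w, u) \<in> E" for u
  proof (cases "u = v")
    case False
    then have "Cset E (w, u) w \<in> {Cset E e w |e. e \<in> E \<and> fst e = w \<and> e \<noteq> (w, v)}"
      using that by auto
    moreover have "(w, u) \<in> snd (Cset E (w, u) w)" by (simp add: Cset_def Let_def)
    ultimately have "(w, u) \<in> snd (Mplus_excl E w v)"
      unfolding Mplus_excl_def ne_union_def snd_conv by blast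
    then show ?thesis by (simp add: ne_union_def)
  qed (simp add: ne_union_def)
  have "Om w v \<in> borel_measurable (sigmaA M D0 Om ?A)"
    by (rule Om_measurable_sigmaA) (simp add: ne_union_def)
  moreover note Xbar_measurable_sigmaA[OF out_edges] Delta
  ultimately have "(\<lambda>\<omega>. Om w v \<omega> * dfrac lam (Xbar N E Om w \<omega>) (Delta N E lam D0 Om n w \<omega>))
      \<in> borel_measurable (sigmaA M D0 Om ?A)"
    by measurable
  then show ?thesis using wv unfolding Sedge_def[abs_def] Dcal_def Ind_def by simp
qed

lemma Stot_measurable:
  assumes T: "underlying_tree N E"
    and Delta: "\<And>w. w \<in> {1..N} \<Longrightarrow> Delta N E lam D0 Om n w
      \<in> borel_measurable (sigmaA M D0 Om (ne_union {Mminus E w, ({w}, {})}))"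
  shows "Stot N E lam D0 Om n v \<in> borel_measurable (sigmaA M D0 Om (Mminus E v))"
proof -
  have "Sedge N E lam D0 Om n w v \<in> borel_measurable (sigmaA M D0 Om (Mminus E v))" for w
  proof (cases "(w, v) \<in> E")
    case True
    then have "w \<in> {1..N}" using T unfolding underlying_tree_def by blast
    then show ?thesis
      using measurable_sigmaA_mono[OF upstream_of_edge_subset_Mminus[OF T True]
          Sedge_measurable[OF True Delta]] by blast
  qed (simp add: Sedge_def[abs_def] Ind_def)
  then show ?thesis unfolding Stot_def[abs_def] by (rule borel_measurable_sum)
qed

lemma Delta_measurable:
  assumes T: "underlying_tree N E" and "v \<in> {1..N}"
  shows "Delta N E lam D0 Om n v
    \<in> borel_measurable (sigmaA M D0 Om (ne_union {Mminus E v, ({v}, {})}))"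
  using \<open>v \<in> {1..N}\<close>
proof (induction n arbitrary: v)
  case 0
  show ?case by (auto intro!: D0_measurable_sigmaA simp: ne_union_def)
next
  case (Suc n)
  let ?A = "ne_union {Mminus E v, ({v}, {})}"
  have "Stot N E lam D0 Om n v \<in> borel_measurable (sigmaA M D0 Om ?A)"
    by (rule measurable_sigmaA_mono[OF ne_subset_ne_union Stot_measurable[OF T Suc.IH]]) auto
  moreover have "D0 v \<in> borel_measurable (sigmaA M D0 Om ?A)"
    by (rule D0_measurable_sigmaA) (simp add: ne_union_def)
  ultimately have "(\<lambda>\<omega>. D0 v \<omega> - Stot N E lam D0 Om n v \<omega>) \<in> borel_measurable (sigmaA M D0 Om ?A)"
    by measurable
  then show ?case by (simp add: Delta_Suc_Stot[abs_def])
qed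

theorem proposition5:
  fixes M :: "'a measure" and N :: nat and E :: "(nat \<times> nat) set" and lam :: real
    and D0 :: "nat \<Rightarrow> 'a \<Rightarrow> real" and Om :: "nat \<Rightarrow> nat \<Rightarrow> 'a \<Rightarrow> real"
  assumes "prob_space M"
    and "underlying_tree N E"
    and "0 < lam" and "lam \<le> 1"
    and "\<And>u. u \<in> {1..N} \<Longrightarrow> D0 u \<in> borel_measurable M"
    and "\<And>w v. (w, v) \<in> E \<Longrightarrow> Om w v \<in> borel_measurable M"
    and "\<And>w v \<omega>. (w, v) \<in> E \<Longrightarrow> \<omega> \<in> space M \<Longrightarrow> Om w v \<omega> \<ge> 0"
  shows "\<forall>n v. v \<in> {1..N} \<longrightarrow>
           Delta N E lam D0 Om n v \<in>
             borel_measurable (sigmaA M D0 Om (ne_union {Mminus E v, ({v}, {})}))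
         \<and> Stot N E lam D0 Om n v \<in> borel_measurable (sigmaA M D0 Om (Mminus E v))
         \<and> (\<forall>w. (w, v) \<in> E \<longrightarrow>
              Sedge N E lam D0 Om n w v \<in>
                borel_measurable (sigmaA M D0 Om
                  (ne_union {Mminus E w, Mplus_excl E w v, ({w}, {}), ({}, {(w, v)})})))"
proof (intro allI impI conjI)
  \<comment> \<open>the \<open>\<sigma>\<close>-algebras are generated by preimages of the balance-sheet variables, so
    neither the measure nor the range of \<open>\<lambda>\<close> or the sign of the exposures matters\<close>
  note T = \<open>underlying_tree N E\<close>
  fix n v assume "v \<in> {1..N}"
  then show "Delta N E lam D0 Om n v
      \<in> borel_measurable (sigmaA M D0 Om (ne_union {Mminus E v, ({v}, {})}))"
    by (rule Delta_measurable[OF T])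
  show "Stot N E lam D0 Om n v \<in> borel_measurable (sigmaA M D0 Om (Mminus E v))"
    by (rule Stot_measurable[OF T Delta_measurable[OF T]])
  fix w assume wv: "(w, v) \<in> E"
  then have "w \<in> {1..N}" using T unfolding underlying_tree_def by blast
  then show "Sedge N E lam D0 Om n w v \<in> borel_measurable (sigmaA M D0 Om
      (ne_union {Mminus E w, Mplus_excl E w v, ({w}, {}), ({}, {(w, v)})}))"
    by (rule Sedge_measurable[OF wv Delta_measurable[OF T]])
qed

end
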